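(* Let $\Phi$ be the $m\times n$ adjacency matrix of a $(2k,\epsilon)$-unbalanced expander with left degree $d$, where $0<\epsilon<1/6$, and let $\alpha(\epsilon)=2\epsilon/(1-2\epsilon)$. Let $u,v\in\mathbb{R}^n$ satisfy $\Phi(v-u)=0$ and $\|v\|_1\le\|u\|_1$. Let $S$ be a set of $k$ coordinates on which $|u_i|$ is largest (i.e. $|u_i|\ge|u_{i'}|$ for all $i\in S$, $i'\notin S$). Then $$\|v-u\|_1\le\frac{2}{1-2\alpha(\epsilon)}\,\|u-u_S\|_1,$$ where $u_S$ is the vector equal to $u$ on $S$ and $0$ outside $S$. (In particular, any solution $x_*$ of $\min\|x_*\|_1$ subject to $\Phi x_*=\Phi x$ satisfies $\|x-x_*\|_1\le \frac{2}{1-2\alpha(\epsilon)}\|x-x_k\|_1$, $x_k$ being the best $k$-term approximation of $x$.)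
   Context: A $(k,\epsilon)$-unbalanced expander is a simple bipartite graph $G=(A,B,E)$ in which every vertex of $A$ has exactly $d$ neighbours (left degree $d$) such that for every $X\subseteq A$ with $|X|\le k$, the neighbourhood $N(X)\subseteq B$ satisfies $|N(X)|\ge(1-\epsilon)d|X|$. The adjacency matrix of $G$ (with $A=\{1,\dots,n\}$, $B=\{1,\dots,m\}$) is the $m\times n$ $0$–$1$ matrix with entry $(j,i)$ equal to $1$ iff $(i,j)\in E$. *)

theory Defs
  imports Complex_Main
begin

text \<open>Bipartite graph G = (A,B,E) with A = {1..n} (left), B = {1..m} (right);
  the edge set E is a set of pairs (i,j) with i in A, j in B (hence simple).\<close>

definition neighbours :: "(nat \<times> nat) set \<Rightarrow> nat set \<Rightarrow> nat set" where
  "neighbours E X = {j. \<exists>i\<in>X. (i, j) \<in> E}"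

definition unbalanced_expander ::
  "nat \<Rightarrow> nat \<Rightarrow> (nat \<times> nat) set \<Rightarrow> nat \<Rightarrow> nat \<Rightarrow> real \<Rightarrow> bool" where
  "unbalanced_expander n m E d k \<epsilon> \<longleftrightarrow>
     E \<subseteq> {1..n} \<times> {1..m} \<and>
     (\<forall>i\<in>{1..n}. card (neighbours E {i}) = d) \<and>
     (\<forall>X. X \<subseteq> {1..n} \<and> card X \<le> k \<longrightarrow>
        real (card (neighbours E X)) \<ge> (1 - \<epsilon>) * real d * real (card X))"

definition adj_matrix :: "(nat \<times> nat) set \<Rightarrow> nat \<Rightarrow> nat \<Rightarrow> real" where
  "adj_matrix E j i = (if (i, j) \<in> E then 1 else 0)"

text \<open>Matrix-vector product of an m x n matrix M with a vector x in R^n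
  (vectors are functions on the index set {1..n}); result indexed by {1..m}.\<close>
definition mat_vec :: "nat \<Rightarrow> (nat \<Rightarrow> nat \<Rightarrow> real) \<Rightarrow> (nat \<Rightarrow> real) \<Rightarrow> nat \<Rightarrow> real" where
  "mat_vec n M x j = (\<Sum>i=1..n. M j i * x i)"

definition l1_norm :: "nat \<Rightarrow> (nat \<Rightarrow> real) \<Rightarrow> real" where
  "l1_norm n x = (\<Sum>i=1..n. \<bar>x i\<bar>)"

definition restrict_vec :: "(nat \<Rightarrow> real) \<Rightarrow> nat set \<Rightarrow> nat \<Rightarrow> real" where
  "restrict_vec u S i = (if i \<in> S then u i else 0)"

definition alpha_eps :: "real \<Rightarrow> real" where
  "alpha_eps \<epsilon> = 2 * \<epsilon> / (1 - 2 * \<epsilon>)"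

end

theory Submission imports Defs begin

(* Write a = |y| for a vector y in the kernel of the adjacency matrix of a
   (2k,eps)-expander and let S0 be a set of k coordinates where a is largest.
   The heart of the proof is the null space property
       sum a S0 <= 2 eps / (1 - 2 eps) * ||y||_1,
   obtained by estimating the "max weight" H = sum over j in N(S0) of the largest
   a_i, i in S0, adjacent to j, from both sides:
     * greedily adding S0 in decreasing order and using expansion of every prefix
       gives (1 - eps) d * sum a S0 <= H;
     * each row of the kernel equation sums to zero, so every entry is at most
       half the row's l1 mass; double counting then gives
       2 H <= d * sum a S0 + sum over i outside S0 of overlap_i * a_i, where
       overlap_i counts the edges from i into N(S0);
     * expansion of S0 together with any k further vertices bounds the overlaps
       on k-blocks, and cutting the outside into consecutive top-k blocks bounds
       the last sum by 2 eps d ||y||_1.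
   Since a top set carries the most mass, the bound holds for every k-set. *)

lemma top_subset_exists:
  fixes a :: "nat \<Rightarrow> real"
  assumes "finite U" "k \<le> card U"
  shows "\<exists>X\<subseteq>U. card X = k \<and> (\<forall>x\<in>X. \<forall>z\<in>U - X. a z \<le> a x)"
  using assms(2)
proof (induction k)
  case 0
  show ?case by (intro exI[of _ "{}"]) auto
next
  case (Suc k)
  then obtain X where X: "X \<subseteq> U" "card X = k" "\<forall>x\<in>X. \<forall>z\<in>U - X. a z \<le> a x"
    by auto
  have fX: "finite X" using X(1) assms(1) finite_subset by blast
  have fin: "finite (U - X)" using assms(1) by simp
  have "U - X \<noteq> {}"
  proof
    assume "U - X = {}"
    then have "card U \<le> card X" using card_mono[OF fX] by blast
    then show False using Suc.prems X(2) by simp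
  qed
  then have "Max (a ` (U - X)) \<in> a ` (U - X)" using fin by simp
  then obtain z where z: "z \<in> U - X" "a z = Max (a ` (U - X))" by auto
  have zmax: "\<forall>z'\<in>U - X. a z' \<le> a z"
    using fin unfolding z(2) by (intro ballI Max_ge) auto
  show ?case
  proof (intro exI[of _ "insert z X"] conjI)
    show "insert z X \<subseteq> U" using z X by auto
    show "card (insert z X) = Suc k" using z fX X by simp
    show "\<forall>x\<in>insert z X. \<forall>z'\<in>U - insert z X. a z' \<le> a x" using zmax X(3) by auto
  qed
qed

lemma sum_le_sum_top:
  fixes a :: "nat \<Rightarrow> real"
  assumes "finite T" "finite S0" "card T \<le> card S0"
    and top: "\<forall>x\<in>S0. \<forall>z\<in>T - S0. a z \<le> a x"
    and a_nonneg: "\<forall>i. 0 \<le> a i"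
  shows "sum a T \<le> sum a S0"
proof -
  have card_diff: "card (T - S0) \<le> card (S0 - T)"
    using assms(1-3) card_mono[OF assms(1), of "T \<inter> S0"]
    by (simp add: card_Diff_subset_Int Int_commute)
  have "sum a (T - S0) \<le> sum a (S0 - T)"
  proof (cases "T - S0 = {}")
    case True
    then show ?thesis using a_nonneg by (metis sum.empty sum_nonneg)
  next
    case False
    then have "S0 - T \<noteq> {}" using card_diff assms(1)
      by (metis card.empty card_gt_0_iff finite_Diff not_le)
    then have "Min (a ` (S0 - T)) \<in> a ` (S0 - T)" using assms(2) by simp
    then obtain x0 where x0: "x0 \<in> S0 - T" "a x0 = Min (a ` (S0 - T))" by auto
    have "sum a (T - S0) \<le> of_nat (card (T - S0)) * a x0"
      by (rule sum_bounded_above) (use top x0 in auto)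
    also have "\<dots> \<le> of_nat (card (S0 - T)) * a x0"
      using card_diff a_nonneg by (simp add: mult_right_mono)
    also have "\<dots> \<le> sum a (S0 - T)"
      by (rule sum_bounded_below) (use assms(2) x0 in auto)
    finally show ?thesis .
  qed
  moreover have "sum a T = sum a (T \<inter> S0) + sum a (T - S0)"
    using assms(1) by (rule sum.Int_Diff)
  moreover have "sum a S0 = sum a (T \<inter> S0) + sum a (S0 - T)"
    using sum.Int_Diff[OF assms(2), of a T] by (simp add: Int_commute)
  ultimately show ?thesis by simp
qed

lemma weighted_sum_block:
  fixes a w :: "nat \<Rightarrow> real"
  assumes "\<forall>i. 0 \<le> w i" "0 \<le> C" "k > 0" "sum w X \<le> C"
    "\<forall>i\<in>X. a i \<le> M" "real k * M \<le> A" "0 \<le> M"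
  shows "(\<Sum>i\<in>X. w i * a i) \<le> C / k * A"
proof -
  have "(\<Sum>i\<in>X. w i * a i) \<le> (\<Sum>i\<in>X. w i * M)"
    by (rule sum_mono) (use assms in \<open>auto intro: mult_left_mono\<close>)
  also have "\<dots> = M * sum w X" by (simp add: sum_distrib_left mult.commute)
  also have "\<dots> \<le> M * C" using assms by (simp add: mult_left_mono)
  also have "\<dots> = C / k * (k * M)" using assms(3) by simp
  also have "\<dots> \<le> C / k * A" using assms(2,6) by (intro mult_left_mono) simp_all
  finally show ?thesis .
qed

text \<open>Cut U into consecutive top-k blocks; each
  block's values are bounded by the average of the previous block.\<close>
lemma weighted_sum_top_blocks:
  fixes a w :: "nat \<Rightarrow> real" and k :: nat
  assumes k: "k > 0" and a_nonneg: "\<forall>i. 0 \<le> a i" and w_nonneg: "\<forall>i. 0 \<le> w i"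
    and C: "0 \<le> C" and block_weight: "\<forall>X\<subseteq>U0. card X \<le> k \<longrightarrow> sum w X \<le> C"
  shows "finite U \<Longrightarrow> U \<subseteq> U0 \<Longrightarrow> \<forall>i\<in>U. a i \<le> M \<Longrightarrow> real k * M \<le> A \<Longrightarrow> 0 \<le> M
    \<Longrightarrow> (\<Sum>i\<in>U. w i * a i) \<le> C / k * (A + sum a U)"
proof (induction "card U" arbitrary: U M A rule: less_induct)
  case less
  show ?case
  proof (cases "card U \<le> k")
    case True
    have "(\<Sum>i\<in>U. w i * a i) \<le> C / k * A"
      by (rule weighted_sum_block[OF w_nonneg C k _ less(4,5,6)])
         (use block_weight less(3) True in blast)
    also have "\<dots> \<le> C / k * (A + sum a U)"
      using C a_nonneg by (intro mult_left_mono) (simp_all add: sum_nonneg)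
    finally show ?thesis .
  next
    case False
    obtain X where X: "X \<subseteq> U" "card X = k" "\<forall>x\<in>X. \<forall>z\<in>U - X. a z \<le> a x"
      using top_subset_exists[OF less(2), of k a] False by auto
    have fX: "finite X" using X(1) less(2) finite_subset by blast
    have head: "(\<Sum>i\<in>X. w i * a i) \<le> C / k * A"
      by (rule weighted_sum_block[OF w_nonneg C k _ _ less(5,6)])
         (use block_weight less(3,4) X(1,2) in auto)
    have below_average: "a i \<le> sum a X / k" if "i \<in> U - X" for i
    proof -
      have "of_nat (card X) * a i \<le> sum a X"
        by (rule sum_bounded_below) (use X(3) that in auto)
      then show ?thesis using X(2) k by (simp add: field_simps)
    qed
    have "card (U - X) < card U"
      using X k less(2) False by (simp add: card_Diff_subset fX)
    then have tail: "(\<Sum>i\<in>U - X. w i * a i) \<le> C / k * (sum a X + sum a (U - X))"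
      by (rule less(1)) (use less(2,3) below_average k a_nonneg in \<open>auto simp: sum_nonneg\<close>)
    have "(\<Sum>i\<in>U. w i * a i) = (\<Sum>i\<in>X. w i * a i) + (\<Sum>i\<in>U - X. w i * a i)"
      by (simp add: sum.subset_diff[OF X(1) less(2)])
    also have "\<dots> \<le> C / k * (A + (sum a X + sum a (U - X)))"
      using head tail by (simp add: distrib_left)
    also have "sum a X + sum a (U - X) = sum a U"
      using less(2) X(1) by (simp add: sum.subset_diff[of X U a])
    finally show ?thesis .
  qed
qed

lemma expander_edges: "unbalanced_expander n m E d K \<epsilon> \<Longrightarrow> E \<subseteq> {1..n} \<times> {1..m}"
  by (simp add: unbalanced_expander_def)

lemma expander_degree:
  "unbalanced_expander n m E d K \<epsilon> \<Longrightarrow> i \<in> {1..n} \<Longrightarrow> card (neighbours E {i}) = d"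
  by (simp add: unbalanced_expander_def)

lemma expander_expansion:
  assumes "unbalanced_expander n m E d K \<epsilon>" "X \<subseteq> {1..n}" "card X \<le> K"
  shows "(1 - \<epsilon>) * real d * real (card X) \<le> real (card (neighbours E X))"
  using assms(1) unfolding unbalanced_expander_def using assms(2,3) by (elim conjE) blast

lemma neighbours_subset: "E \<subseteq> {1..n} \<times> {1..m} \<Longrightarrow> neighbours E X \<subseteq> {1..m}"
  by (auto simp: neighbours_def)

lemma finite_neighbours: "E \<subseteq> {1..n} \<times> {1..m} \<Longrightarrow> finite (neighbours E X)"
  by (rule finite_subset[OF neighbours_subset]) simp_all

lemma neighbours_Un: "neighbours E (X \<union> Y) = neighbours E X \<union> neighbours E Y"
  by (auto simp: neighbours_def)

lemma neighbours_insert: "neighbours E (insert z X) = neighbours E {z} \<union> neighbours E X"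
  using neighbours_Un[of E "{z}" X] by simp

lemma card_neighbours_le:
  assumes "unbalanced_expander n m E d K \<epsilon>" "finite X" "X \<subseteq> {1..n}"
  shows "card (neighbours E X) \<le> d * card X"
proof -
  have "neighbours E X = (\<Union>i\<in>X. neighbours E {i})" by (auto simp: neighbours_def)
  then have "card (neighbours E X) \<le> (\<Sum>i\<in>X. card (neighbours E {i}))"
    using card_UN_le[OF assms(2)] by simp
  also have "\<dots> = (\<Sum>i\<in>X. d)" using expander_degree[OF assms(1)] assms(3) by (intro sum.cong) auto
  finally show ?thesis by (simp add: mult.commute)
qed

definition max_weight :: "(nat \<times> nat) set \<Rightarrow> (nat \<Rightarrow> real) \<Rightarrow> nat set \<Rightarrow> real" where
  "max_weight E a X = (\<Sum>j\<in>neighbours E X. Max (a ` {i\<in>X. (i, j) \<in> E}))"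

text \<open>Adding a vertex z of minimal value changes no existing maximum; each new
  neighbour contributes a z.\<close>
lemma max_weight_insert_min:
  assumes fE: "E \<subseteq> {1..n} \<times> {1..m}" and fX: "finite X"
    and zmin: "\<forall>y\<in>X. a z \<le> a y"
  shows "max_weight E a (insert z X) = max_weight E a X
     + a z * (real (card (neighbours E (insert z X))) - real (card (neighbours E X)))"
proof -
  define NX where "NX = neighbours E X"
  define NZ where "NZ = neighbours E {z} - NX"
  have split: "neighbours E (insert z X) = NX \<union> NZ"
    unfolding NX_def NZ_def using neighbours_insert by blast
  have fin: "finite NX" "finite NZ"
    unfolding NX_def NZ_def using finite_neighbours[OF fE] by auto
  have disj: "NX \<inter> NZ = {}" unfolding NZ_def by auto
  have old: "Max (a ` {i\<in>insert z X. (i, j) \<in> E}) = Max (a ` {i\<in>X. (i, j) \<in> E})"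
    if j: "j \<in> NX" for j
  proof -
    define B where "B = {i\<in>X. (i, j) \<in> E}"
    have fB: "finite B" unfolding B_def using fX by simp
    obtain b where b: "b \<in> B" using j unfolding B_def NX_def neighbours_def by auto
    have "a z \<le> a b" using zmin b unfolding B_def by auto
    also have "a b \<le> Max (a ` B)" using fB b by simp
    finally have le: "a z \<le> Max (a ` B)" .
    show ?thesis
    proof (cases "(z, j) \<in> E")
      case True
      then have "{i\<in>insert z X. (i, j) \<in> E} = insert z B" unfolding B_def by auto
      moreover have "a ` B \<noteq> {}" using b by blast
      ultimately show ?thesis using fB le unfolding B_def by (simp add: max_def)
    next
      case False
      then have "{i\<in>insert z X. (i, j) \<in> E} = B" unfolding B_def by auto
      then show ?thesis unfolding B_def by simp
    qed
  qed
  have new: "Max (a ` {i\<in>insert z X. (i, j) \<in> E}) = a z" if "j \<in> NZ" for j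
  proof -
    have "{i\<in>insert z X. (i, j) \<in> E} = {z}"
      using that unfolding NZ_def NX_def neighbours_def by auto
    then show ?thesis by simp
  qed
  have "max_weight E a (insert z X)
      = (\<Sum>j\<in>NX. Max (a ` {i\<in>insert z X. (i, j) \<in> E}))
      + (\<Sum>j\<in>NZ. Max (a ` {i\<in>insert z X. (i, j) \<in> E}))"
    unfolding max_weight_def split by (rule sum.union_disjoint[OF fin disj])
  also have "\<dots> = (\<Sum>j\<in>NX. Max (a ` {i\<in>X. (i, j) \<in> E})) + (\<Sum>j\<in>NZ. a z)"
    by (simp only: sum.cong[OF refl old] sum.cong[OF refl new])
  also have "\<dots> = max_weight E a X + real (card NZ) * a z"
    unfolding max_weight_def NX_def by simp
  also have "real (card NZ)
      = real (card (neighbours E (insert z X))) - real (card (neighbours E X))"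
    unfolding split NX_def using fin disj by (simp add: card_Un_disjoint NX_def)
  finally show ?thesis by (simp only: mult.commute)
qed

text \<open>Adding the vertices of X in decreasing
  order of a, every prefix expands, so the number of new neighbours is on average
  (1 - eps) d, each charged the value of the vertex that reached it first.  The
  correction term with a lower bound mu of a on X makes the induction go through.\<close>
lemma max_weight_greedy_bound:
  fixes a :: "nat \<Rightarrow> real"
  assumes ue: "unbalanced_expander n m E d K \<epsilon>" and fX: "finite X"
  shows "X \<subseteq> {1..n} \<Longrightarrow> card X \<le> K \<Longrightarrow> \<forall>x\<in>X. \<mu> \<le> a x \<Longrightarrow>
    (1 - \<epsilon>) * d * sum a X - \<mu> * ((1 - \<epsilon>) * d * card X - card (neighbours E X))
      \<le> max_weight E a X"
  using fX
proof (induction arbitrary: \<mu> rule: finite_ranking_induct[where f = "\<lambda>x. - a x"])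
  case empty
  then show ?case by (simp add: max_weight_def neighbours_def)
next
  case (insert x X)
  show ?case
  proof (cases "x \<in> X")
    case True
    then show ?thesis using insert by (simp add: insert_absorb)
  next
    case False
    have x_min: "\<forall>y\<in>X. a x \<le> a y" using insert.hyps(2) by force
    have card_ins: "card (insert x X) = card X + 1" using False insert.hyps(1) by simp
    have IH: "(1 - \<epsilon>) * d * sum a X - a x * ((1 - \<epsilon>) * d * card X - card (neighbours E X))
        \<le> max_weight E a X"
      by (rule insert.IH) (use insert.prems card_ins x_min in auto)
    have step: "max_weight E a (insert x X) = max_weight E a X
        + a x * (real (card (neighbours E (insert x X))) - real (card (neighbours E X)))"
      by (rule max_weight_insert_min[OF expander_edges[OF ue] insert.hyps(1) x_min])
    define s where "s = (1 - \<epsilon>) * d * card (insert x X) - real (card (neighbours E (insert x X)))"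
    have "s \<le> 0" unfolding s_def using expander_expansion[OF ue insert.prems(1,2)] by simp
    then have "(a x - \<mu>) * s \<le> 0"
      using insert.prems(3) by (simp add: mult_nonneg_nonpos)
    moreover have "max_weight E a (insert x X)
        - ((1 - \<epsilon>) * d * (sum a X + a x) - \<mu> * s)
        = (max_weight E a X
            - ((1 - \<epsilon>) * d * sum a X - a x * ((1 - \<epsilon>) * d * card X - card (neighbours E X))))
          - (a x - \<mu>) * s"
      unfolding step s_def card_ins by (simp add: algebra_simps)
    moreover have "sum a (insert x X) = sum a X + a x" using False insert.hyps(1) by simp
    ultimately show ?thesis using IH unfolding s_def by simp
  qed
qed

lemma max_weight_lower_bound:
  fixes a :: "nat \<Rightarrow> real"
  assumes "unbalanced_expander n m E d K \<epsilon>" "finite X" "X \<subseteq> {1..n}" "card X \<le> K"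
    and "\<forall>x\<in>X. 0 \<le> a x"
  shows "(1 - \<epsilon>) * d * sum a X \<le> max_weight E a X"
  using max_weight_greedy_bound[OF assms(1,2,3,4), of 0] assms(5) by simp

definition overlap :: "(nat \<times> nat) set \<Rightarrow> nat set \<Rightarrow> nat \<Rightarrow> real" where
  "overlap E T i = real (card (neighbours E {i} \<inter> neighbours E T))"

text \<open>In a (2k, eps)-expander, k vertices outside a k-set S0 have total overlap with
  S0 at most 2 eps d k: otherwise S0 together with them would have too few
  neighbours.\<close>
lemma overlap_block_bound:
  assumes ue: "unbalanced_expander n m E d (2 * k) \<epsilon>" and eps: "0 \<le> \<epsilon>"
    and S0: "S0 \<subseteq> {1..n}" "card S0 = k"
    and X: "X \<subseteq> {1..n} - S0" "card X \<le> k"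
  shows "sum (overlap E S0) X \<le> 2 * \<epsilon> * d * k"
proof -
  have fE: "E \<subseteq> {1..n} \<times> {1..m}" by (rule expander_edges[OF ue])
  have fX: "finite X" and fS0: "finite S0"
    using X(1) S0(1) finite_subset by (blast, blast)
  define NS where "NS = neighbours E S0"
  have fNS: "finite NS" unfolding NS_def by (rule finite_neighbours[OF fE])
  have overlap_eq: "overlap E S0 i = d - real (card (neighbours E {i} - NS))" if "i \<in> X" for i
  proof -
    have "card (neighbours E {i}) = d" using expander_degree[OF ue] that X(1) by blast
    moreover have "card (neighbours E {i}) = card (neighbours E {i} \<inter> NS) + card (neighbours E {i} - NS)"
      using finite_neighbours[OF fE] by (metis card_Int_Diff)
    ultimately show ?thesis unfolding overlap_def NS_def by simp
  qed
  have new_nbrs: "card (neighbours E X - NS) \<le> (\<Sum>i\<in>X. card (neighbours E {i} - NS))"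
  proof -
    have "neighbours E X - NS = (\<Union>i\<in>X. neighbours E {i} - NS)" by (auto simp: neighbours_def)
    then show ?thesis using card_UN_le[OF fX, of "\<lambda>i. neighbours E {i} - NS"] by (simp only:)
  qed
  have union_nbrs: "card (neighbours E (X \<union> S0)) = card (neighbours E X - NS) + card NS"
  proof -
    have "neighbours E (X \<union> S0) = (neighbours E X - NS) \<union> NS"
      unfolding NS_def neighbours_Un by blast
    moreover have "card ((neighbours E X - NS) \<union> NS) = card (neighbours E X - NS) + card NS"
      using fNS finite_neighbours[OF fE, of X] by (intro card_Un_disjoint) auto
    ultimately show ?thesis by (simp only:)
  qed
  have card_union: "card (X \<union> S0) = card X + k"
    using card_Un_disjoint[OF fX fS0] X(1) S0(2) by auto
  have expand: "(1 - \<epsilon>) * d * (card X + k) \<le> card (neighbours E X - NS) + card NS"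
    using expander_expansion[OF ue, of "X \<union> S0"] X S0(1) card_union union_nbrs by auto
  have NS_le: "real (card NS) \<le> d * k"
    using card_neighbours_le[OF ue fS0 S0(1)] S0(2) unfolding NS_def
    by (metis of_nat_le_iff of_nat_mult)
  have "sum (overlap E S0) X = d * card X - (\<Sum>i\<in>X. real (card (neighbours E {i} - NS)))"
    using overlap_eq by (simp add: sum_subtractf mult.commute)
  also have "\<dots> \<le> real d * card X - card (neighbours E X - NS)"
    using new_nbrs by (simp add: of_nat_sum[symmetric] del: of_nat_sum)
  also have "\<dots> \<le> \<epsilon> * d * (card X + k)"
    using expand NS_le by (simp add: algebra_simps)
  also have "\<dots> \<le> \<epsilon> * d * (k + k)"
    using eps X(2) by (intro mult_left_mono) simp_all
  finally show ?thesis by simp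
qed

lemma abs_le_half_sum_abs:
  fixes y :: "nat \<Rightarrow> real"
  assumes "finite R" "sum y R = 0" "i \<in> R"
  shows "2 * \<bar>y i\<bar> \<le> (\<Sum>i\<in>R. \<bar>y i\<bar>)"
proof -
  have "y i = - sum y (R - {i})" using sum.remove[OF assms(1,3), of y] assms(2) by simp
  then have "\<bar>y i\<bar> \<le> (\<Sum>i\<in>R - {i}. \<bar>y i\<bar>)" by (simp add: sum_abs)
  moreover have "(\<Sum>i\<in>R. \<bar>y i\<bar>) = \<bar>y i\<bar> + (\<Sum>i\<in>R - {i}. \<bar>y i\<bar>)"
    by (rule sum.remove[OF assms(1,3)])
  ultimately show ?thesis by simp
qed

text \<open>For y in the kernel of the adjacency matrix, the max weight of |y| on T is at
  most half the l1 mass of y on the rows N(T), since each row of the kernel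
  equation sums to zero.\<close>
lemma max_weight_kernel_bound:
  fixes y :: "nat \<Rightarrow> real"
  assumes fE: "E \<subseteq> {1..n} \<times> {1..m}"
    and kernel: "\<forall>j\<in>{1..m}. (\<Sum>i=1..n. adj_matrix E j i * y i) = 0"
    and T: "T \<subseteq> {1..n}"
  shows "2 * max_weight E (\<lambda>i. \<bar>y i\<bar>) T
    \<le> (\<Sum>j\<in>neighbours E T. \<Sum>i\<in>{i\<in>{1..n}. (i, j) \<in> E}. \<bar>y i\<bar>)"
proof -
  have row: "2 * Max ((\<lambda>i. \<bar>y i\<bar>) ` {i\<in>T. (i, j) \<in> E}) \<le> (\<Sum>i\<in>{i\<in>{1..n}. (i, j) \<in> E}. \<bar>y i\<bar>)"
    if j: "j \<in> neighbours E T" for j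
  proof -
    have "(\<Sum>i=1..n. if (i, j) \<in> E then y i else 0) = (\<Sum>i=1..n. adj_matrix E j i * y i)"
      by (intro sum.cong) (simp_all add: adj_matrix_def)
    also have "\<dots> = 0"
      using kernel neighbours_subset[OF fE] j by blast
    finally have "(\<Sum>i=1..n. if (i, j) \<in> E then y i else 0) = 0" .
    then have row_zero: "sum y {i\<in>{1..n}. (i, j) \<in> E} = 0"
      by (simp only: sum.inter_filter[OF finite_atLeastAtMost])
    define B where "B = {i\<in>T. (i, j) \<in> E}"
    have "finite B" using T finite_subset unfolding B_def by fastforce
    moreover have "B \<noteq> {}" using j unfolding B_def neighbours_def by auto
    ultimately have "Max ((\<lambda>i. \<bar>y i\<bar>) ` B) \<in> (\<lambda>i. \<bar>y i\<bar>) ` B" by simp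
    then obtain i0 where i0: "i0 \<in> B" "\<bar>y i0\<bar> = Max ((\<lambda>i. \<bar>y i\<bar>) ` B)" by auto
    have "i0 \<in> {i\<in>{1..n}. (i, j) \<in> E}" using i0(1) T unfolding B_def by auto
    from abs_le_half_sum_abs[OF _ row_zero this] show ?thesis using i0(2) unfolding B_def by simp
  qed
  show ?thesis
    unfolding max_weight_def sum_distrib_left by (rule sum_mono) (rule row)
qed

text \<open>Double counting the incidences between {1..n} and the rows N(T): vertices of T
  lie on d such rows, any other vertex i on overlap E T i of them.\<close>
lemma incidence_sum_eq:
  fixes a :: "nat \<Rightarrow> real"
  assumes ue: "unbalanced_expander n m E d K \<epsilon>" and T: "T \<subseteq> {1..n}"
  shows "(\<Sum>j\<in>neighbours E T. \<Sum>i\<in>{i\<in>{1..n}. (i, j) \<in> E}. a i)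
    = d * sum a T + (\<Sum>i\<in>{1..n} - T. overlap E T i * a i)"
proof -
  have fN: "finite (neighbours E T)" by (rule finite_neighbours[OF expander_edges[OF ue]])
  have row_count: "{j. j \<in> neighbours E T \<and> (i, j) \<in> E} = neighbours E {i} \<inter> neighbours E T" for i
    by (auto simp: neighbours_def)
  have inside: "overlap E T i = d" if "i \<in> T" for i
  proof -
    have "neighbours E {i} \<inter> neighbours E T = neighbours E {i}"
      using that by (auto simp: neighbours_def)
    then show ?thesis unfolding overlap_def using expander_degree[OF ue] that T by auto
  qed
  have "(\<Sum>j\<in>neighbours E T. \<Sum>i\<in>{i\<in>{1..n}. (i, j) \<in> E}. a i)
      = (\<Sum>i\<in>{1..n}. \<Sum>j\<in>{j. j \<in> neighbours E T \<and> (i, j) \<in> E}. a i)"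
    using sum.swap_restrict[OF fN, of "{1..n}" "\<lambda>j i. a i" "\<lambda>j i. (i, j) \<in> E"] by simp
  also have "\<dots> = (\<Sum>i\<in>{1..n}. overlap E T i * a i)"
    unfolding overlap_def row_count by simp
  also have "\<dots> = (\<Sum>i\<in>T. overlap E T i * a i) + (\<Sum>i\<in>{1..n} - T. overlap E T i * a i)"
    using sum.subset_diff[OF T, of "\<lambda>i. overlap E T i * a i"] by simp
  also have "(\<Sum>i\<in>T. overlap E T i * a i) = d * sum a T"
    using inside by (simp add: sum_distrib_left)
  finally show ?thesis .
qed

lemma null_space_property_top:
  fixes y :: "nat \<Rightarrow> real"
  assumes ue: "unbalanced_expander n m E d (2 * k) \<epsilon>" and d: "d > 0"
    and eps: "0 \<le> \<epsilon>" "\<epsilon> < 1 / 2" and k: "k > 0"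
    and kernel: "\<forall>j\<in>{1..m}. (\<Sum>i=1..n. adj_matrix E j i * y i) = 0"
    and S0: "S0 \<subseteq> {1..n}" "card S0 = k"
    and top: "\<forall>x\<in>S0. \<forall>z\<in>{1..n} - S0. \<bar>y z\<bar> \<le> \<bar>y x\<bar>"
  shows "(\<Sum>i\<in>S0. \<bar>y i\<bar>) \<le> 2 * \<epsilon> / (1 - 2 * \<epsilon>) * (\<Sum>i=1..n. \<bar>y i\<bar>)"
proof -
  define a where "a = (\<lambda>i. \<bar>y i\<bar>)"
  define A where "A = sum a S0"
  define Out where "Out = sum a ({1..n} - S0)"
  have total: "sum a {1..n} = A + Out"
    unfolding A_def Out_def using sum.subset_diff[OF S0(1), of a] by simp
  have fS0: "finite S0" using S0(1) finite_subset by blast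
  have lower: "(1 - \<epsilon>) * d * A \<le> max_weight E a S0"
    unfolding A_def by (rule max_weight_lower_bound[OF ue fS0 S0(1)]) (simp_all add: S0(2) a_def)
  have upper: "2 * max_weight E a S0 \<le> d * A + (\<Sum>i\<in>{1..n} - S0. overlap E S0 i * a i)"
    using max_weight_kernel_bound[OF expander_edges[OF ue] kernel S0(1)]
      incidence_sum_eq[OF ue S0(1), of a]
    unfolding a_def A_def by simp
  have below_average: "\<forall>i\<in>{1..n} - S0. a i \<le> A / k"
  proof
    fix i assume "i \<in> {1..n} - S0"
    then have "of_nat (card S0) * a i \<le> A"
      unfolding A_def by (intro sum_bounded_below) (use top in \<open>auto simp: a_def\<close>)
    then show "a i \<le> A / k" using S0(2) k by (simp add: field_simps)
  qed
  have "(\<Sum>i\<in>{1..n} - S0. overlap E S0 i * a i) \<le> (2 * \<epsilon> * d * k) / k * (A + Out)"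
    unfolding Out_def
  proof (rule weighted_sum_top_blocks[OF k _ _ _ _ _ subset_refl below_average])
    show "\<forall>X\<subseteq>{1..n} - S0. card X \<le> k \<longrightarrow> sum (overlap E S0) X \<le> 2 * \<epsilon> * d * k"
      using overlap_block_bound[OF ue eps(1) S0] by blast
  qed (use eps(1) in \<open>auto simp: a_def A_def overlap_def sum_nonneg\<close>)
  then have blocks: "(\<Sum>i\<in>{1..n} - S0. overlap E S0 i * a i) \<le> 2 * \<epsilon> * d * (A + Out)"
    using k by simp
  have "d * ((1 - 2 * \<epsilon>) * A) \<le> d * (2 * \<epsilon> * (A + Out))"
    using lower upper blocks by (simp add: algebra_simps)
  then have "(1 - 2 * \<epsilon>) * A \<le> 2 * \<epsilon> * (A + Out)" using d by simp
  then show ?thesis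
    using eps(2) total unfolding A_def a_def by (simp add: pos_le_divide_eq mult.commute)
qed

text \<open>Null space property: the same bound holds for every set of k coordinates,
  since a top set carries at least as much mass.\<close>
lemma expander_null_space_property:
  fixes y :: "nat \<Rightarrow> real"
  assumes ue: "unbalanced_expander n m E d (2 * k) \<epsilon>" and d: "d > 0"
    and eps: "0 \<le> \<epsilon>" "\<epsilon> < 1 / 2"
    and kernel: "\<forall>j\<in>{1..m}. (\<Sum>i=1..n. adj_matrix E j i * y i) = 0"
    and S: "S \<subseteq> {1..n}" "card S = k"
  shows "(\<Sum>i\<in>S. \<bar>y i\<bar>) \<le> 2 * \<epsilon> / (1 - 2 * \<epsilon>) * (\<Sum>i=1..n. \<bar>y i\<bar>)"
proof (cases "k = 0")
  case True
  then have "S = {}" using S finite_subset by fastforce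
  then show ?thesis using eps by (simp add: sum_nonneg)
next
  case False
  have "k \<le> card {1..n}" using card_mono[OF _ S(1)] S(2) by simp
  then obtain S0 where S0: "S0 \<subseteq> {1..n}" "card S0 = k"
    and top: "\<forall>x\<in>S0. \<forall>z\<in>{1..n} - S0. \<bar>y z\<bar> \<le> \<bar>y x\<bar>"
    using top_subset_exists[of "{1..n}" k "\<lambda>i. \<bar>y i\<bar>"] by auto
  have "(\<Sum>i\<in>S. \<bar>y i\<bar>) \<le> (\<Sum>i\<in>S0. \<bar>y i\<bar>)"
    using S S0 top by (intro sum_le_sum_top) (auto intro: finite_subset)
  also have "\<dots> \<le> 2 * \<epsilon> / (1 - 2 * \<epsilon>) * (\<Sum>i=1..n. \<bar>y i\<bar>)"
    using False by (intro null_space_property_top[OF ue d eps _ kernel S0 top]) simp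
  finally show ?thesis .
qed

lemma l1_error_from_null_space_property:
  fixes u v :: "nat \<Rightarrow> real" and \<alpha> :: real
  assumes N: "finite N" "S \<subseteq> N" and alpha: "2 * \<alpha> < 1"
    and nsp: "(\<Sum>i\<in>S. \<bar>v i - u i\<bar>) \<le> \<alpha> * (\<Sum>i\<in>N. \<bar>v i - u i\<bar>)"
    and norm_le: "(\<Sum>i\<in>N. \<bar>v i\<bar>) \<le> (\<Sum>i\<in>N. \<bar>u i\<bar>)"
  shows "(\<Sum>i\<in>N. \<bar>v i - u i\<bar>) \<le> 2 / (1 - 2 * \<alpha>) * (\<Sum>i\<in>N - S. \<bar>u i\<bar>)"
proof -
  have split: "sum f N = sum f S + sum f (N - S)" for f :: "nat \<Rightarrow> real"
    using sum.subset_diff[OF N(2,1)] by (simp add: add.commute)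
  have on_S: "(\<Sum>i\<in>S. \<bar>u i\<bar>) - (\<Sum>i\<in>S. \<bar>v i - u i\<bar>) \<le> (\<Sum>i\<in>S. \<bar>v i\<bar>)"
    using sum_mono[of S "\<lambda>i. \<bar>u i\<bar> - \<bar>v i - u i\<bar>" "\<lambda>i. \<bar>v i\<bar>"]
    by (simp add: sum_subtractf abs_triangle_ineq2 abs_minus_commute)
  have off_S: "(\<Sum>i\<in>N - S. \<bar>v i - u i\<bar>) - (\<Sum>i\<in>N - S. \<bar>u i\<bar>) \<le> (\<Sum>i\<in>N - S. \<bar>v i\<bar>)"
    using sum_mono[of "N - S" "\<lambda>i. \<bar>v i - u i\<bar> - \<bar>u i\<bar>" "\<lambda>i. \<bar>v i\<bar>"]
    by (simp add: sum_subtractf abs_triangle_ineq2)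
  have "(\<Sum>i\<in>N. \<bar>v i - u i\<bar>) \<le> 2 * (\<Sum>i\<in>S. \<bar>v i - u i\<bar>) + 2 * (\<Sum>i\<in>N - S. \<bar>u i\<bar>)"
    using on_S off_S norm_le split[of "\<lambda>i. \<bar>v i\<bar>"] split[of "\<lambda>i. \<bar>u i\<bar>"]
      split[of "\<lambda>i. \<bar>v i - u i\<bar>"] by linarith
  then have "(1 - 2 * \<alpha>) * (\<Sum>i\<in>N. \<bar>v i - u i\<bar>) \<le> 2 * (\<Sum>i\<in>N - S. \<bar>u i\<bar>)"
    using nsp by (simp add: algebra_simps)
  then show ?thesis using alpha by (simp add: pos_le_divide_eq mult.commute)
qed

text \<open>Main theorem: l1 recovery bound for expander adjacency matrices, from the null
  space property with constant alpha_eps eps, which is below 1/2 as eps < 1/6.\<close>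
theorem theorem3:
  fixes n m d k :: nat and E :: "(nat \<times> nat) set" and \<epsilon> :: real
    and u v :: "nat \<Rightarrow> real" and S :: "nat set"
  assumes expander: "unbalanced_expander n m E d (2 * k) \<epsilon>"
    and d_pos: "d > 0"
    and eps_pos: "0 < \<epsilon>" and eps_small: "\<epsilon> < 1 / 6"
    and null: "\<forall>j\<in>{1..m}. mat_vec n (adj_matrix E) (\<lambda>i. v i - u i) j = 0"
    and norm_le: "l1_norm n v \<le> l1_norm n u"
    and S_sub: "S \<subseteq> {1..n}" and S_card: "card S = k"
    and S_top: "\<forall>i\<in>S. \<forall>i'\<in>{1..n} - S. \<bar>u i\<bar> \<ge> \<bar>u i'\<bar>"
  shows "l1_norm n (\<lambda>i. v i - u i)
           \<le> 2 / (1 - 2 * alpha_eps \<epsilon>) * l1_norm n (\<lambda>i. u i - restrict_vec u S i)"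
proof -
  have kernel: "\<forall>j\<in>{1..m}. (\<Sum>i=1..n. adj_matrix E j i * (v i - u i)) = 0"
    using null unfolding mat_vec_def .
  have nsp: "(\<Sum>i\<in>S. \<bar>v i - u i\<bar>) \<le> alpha_eps \<epsilon> * (\<Sum>i=1..n. \<bar>v i - u i\<bar>)"
    unfolding alpha_eps_def
    by (rule expander_null_space_property[OF expander d_pos _ _ kernel S_sub S_card])
       (use eps_pos eps_small in auto)
  have alpha: "2 * alpha_eps \<epsilon> < 1"
    using eps_pos eps_small by (simp add: alpha_eps_def field_simps)
  have residual: "l1_norm n (\<lambda>i. u i - restrict_vec u S i) = (\<Sum>i\<in>{1..n} - S. \<bar>u i\<bar>)"
    using sum.subset_diff[OF S_sub, of "\<lambda>i. \<bar>u i - restrict_vec u S i\<bar>"]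
    by (simp add: l1_norm_def restrict_vec_def)
  show ?thesis
    unfolding residual unfolding l1_norm_def
    by (rule l1_error_from_null_space_property[OF _ S_sub alpha nsp])
       (use norm_le in \<open>simp_all add: l1_norm_def\<close>)
qed

end
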